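(* Let $k\ge2$, $IS\in\{\Box,\blacksquare\}^k$, and let $\tau$ be a correct compositional translation from $\mathrm{SYNCSIMPLE}$ into $\mathrm{LOCKSIMPLE}_{k,IS}$. Then there is some $i$ such that $\tau(!)$ has a blocking subsequence of the form $RP_i$ or $P_iRP_i$, where $R$ contains neither $P_i$ nor $T_i$. The same holds for $\tau(?)$.
   Context: $\mathrm{SYNCSIMPLE}$: subprocesses $\mathcal{U} ::= \checkmark \mid 0 \mid\, !\mathcal{U} \mid\, ?\mathcal{U}$; processes are finite parallel compositions ($\mid$ associative, commutative, $0$ a unit). Reduction: $!\mathcal{U}_1\mid ?\mathcal{U}_2\mid \mathcal{P}\to \mathcal{U}_1\mid\mathcal{U}_2\mid\mathcal{P}$. Successful: of form $\checkmark\mid\mathcal{P}$; may-convergent: reduces to a successful process; must-convergent: every reachable process is may-convergent. $\mathrm{LOCKSIMPLE}_{k,IS}$ ($IS\in\{\Box,\blacksquare\}^k$, $\Box$ empty, $\blacksquare$ full): subprocesses are words over $\{P_1,T_1,\dots,P_k,T_k\}$ followed by $0$ or $\checkmark$; states $(\mathcal{P},C)$ reduce by $(P_i\mathcal{U}\mid\mathcal{P},C)\to(\mathcal{U}\mid\mathcal{P},C[C_i:=\blacksquare])$ only if $C_i=\Box$, and $(T_i\mathcal{U}\mid\mathcal{P},C)\to(\mathcal{U}\mid\mathcal{P},C[C_i:=\Box])$ always. Success = process contains $\checkmark$; a process $\mathcal{P}$ is may/must-convergent iff the state $(\mathcal{P},IS)$ is. A compositional translation $\tau$ is given by words $\tau(!),\tau(?)$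 with $\tau(0)=0$, $\tau(\checkmark)=\checkmark$, $\tau(!\mathcal{U})=\tau(!)\tau(\mathcal{U})$, $\tau(?\mathcal{U})=\tau(?)\tau(\mathcal{U})$, $\tau$ commuting with $\mid$; correct = preserves and reflects may- and must-convergence. Blocking prefix of a word $S$: a prefix of $S$ of the form $R_1P_iR_2P_i$ with $R_2$ containing no $P_i,T_i$, or of the form $R_1P_i$ with $R_1$ containing no $P_i,T_i$, such that executing $S$ alone as a single subprocess starting with store $IS$ gets stuck exactly before this last $P_i$. The suffix $P_iR_2P_i$, resp. $R_1P_i$, is then called a blocking subsequence of $S$. *)

theory Defs
  imports Main "HOL-Library.Multiset"
begin

datatype ssub = SCheck | SZero | SSend ssub | SRecv ssub

type_synonym sproc = "ssub multiset"

inductive sred :: "sproc \<Rightarrow> sproc \<Rightarrow> bool" where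
  "sred ({#SSend u1, SRecv u2#} + P) ({#u1, u2#} + P)"

definition s_successful :: "sproc \<Rightarrow> bool" where
  "s_successful P \<longleftrightarrow> SCheck \<in># P"

definition s_may :: "sproc \<Rightarrow> bool" where
  "s_may P \<longleftrightarrow> (\<exists>Q. sred\<^sup>*\<^sup>* P Q \<and> s_successful Q)"

definition s_must :: "sproc \<Rightarrow> bool" where
  "s_must P \<longleftrightarrow> (\<forall>Q. sred\<^sup>*\<^sup>* P Q \<longrightarrow> s_may Q)"

text \<open>Lock indices are 0-based (0..k-1). A store is a bool list of length k;
  True = full, False = empty.\<close>

datatype lact = LP nat | LT nat

fun lidx :: "lact \<Rightarrow> nat" where
  "lidx (LP i) = i" | "lidx (LT i) = i"

type_synonym lword = "lact list"
text \<open>A subprocess: a word followed by 0 (False) or checkmark (True).\<close>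
type_synonym lsub = "lword \<times> bool"
type_synonym lproc = "lsub multiset"
type_synonym store = "bool list"

inductive lred :: "lproc \<times> store \<Rightarrow> lproc \<times> store \<Rightarrow> bool" where
  lred_P: "\<not> C ! i \<Longrightarrow> lred ({#(LP i # u, e)#} + P, C) ({#(u, e)#} + P, C[i := True])"
| lred_T: "lred ({#(LT i # u, e)#} + P, C) ({#(u, e)#} + P, C[i := False])"

definition l_successful :: "lproc \<times> store \<Rightarrow> bool" where
  "l_successful S \<longleftrightarrow> ([], True) \<in># fst S"

definition l_may :: "lproc \<times> store \<Rightarrow> bool" where
  "l_may S \<longleftrightarrow> (\<exists>S'. lred\<^sup>*\<^sup>* S S' \<and> l_successful S')"

definition l_must :: "lproc \<times> store \<Rightarrow> bool" where
  "l_must S \<longleftrightarrow> (\<forall>S'. lred\<^sup>*\<^sup>* S S' \<longrightarrow> l_may S')"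

text \<open>The translation given by the words ws = tau(!) and wr = tau(?).\<close>
fun tr_sub :: "lword \<Rightarrow> lword \<Rightarrow> ssub \<Rightarrow> lsub" where
  "tr_sub ws wr SCheck = ([], True)"
| "tr_sub ws wr SZero = ([], False)"
| "tr_sub ws wr (SSend u) = (ws @ fst (tr_sub ws wr u), snd (tr_sub ws wr u))"
| "tr_sub ws wr (SRecv u) = (wr @ fst (tr_sub ws wr u), snd (tr_sub ws wr u))"

definition tr_proc :: "lword \<Rightarrow> lword \<Rightarrow> sproc \<Rightarrow> lproc" where
  "tr_proc ws wr P = image_mset (tr_sub ws wr) P"

definition correct_translation :: "nat \<Rightarrow> store \<Rightarrow> lword \<Rightarrow> lword \<Rightarrow> bool" where
  "correct_translation k IS ws wr \<longleftrightarrow>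
     (\<forall>a \<in> set ws \<union> set wr. lidx a < k) \<and>
     (\<forall>P. (s_may P \<longleftrightarrow> l_may (tr_proc ws wr P, IS)) \<and>
          (s_must P \<longleftrightarrow> l_must (tr_proc ws wr P, IS)))"

text \<open>Run a word as a single subprocess: Some final store if it runs to the end,
  None if it gets stuck.\<close>
fun exec_word :: "store \<Rightarrow> lword \<Rightarrow> store option" where
  "exec_word C [] = Some C"
| "exec_word C (LP i # w) = (if C ! i then None else exec_word (C[i := True]) w)"
| "exec_word C (LT i # w) = exec_word (C[i := False]) w"

definition stuck_before :: "store \<Rightarrow> lword \<Rightarrow> nat \<Rightarrow> nat \<Rightarrow> bool" where
  "stuck_before IS S n i \<longleftrightarrow> n < length S \<and> S ! n = LP i \<and>
     (\<exists>C. exec_word IS (take n S) = Some C \<and> C ! i)"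

definition no_lock :: "nat \<Rightarrow> lword \<Rightarrow> bool" where
  "no_lock i R \<longleftrightarrow> LP i \<notin> set R \<and> LT i \<notin> set R"

definition has_blocking_subseq :: "store \<Rightarrow> lword \<Rightarrow> nat \<Rightarrow> bool" where
  "has_blocking_subseq IS S i \<longleftrightarrow>
     (\<exists>R1 R2 rest. S = R1 @ [LP i] @ R2 @ [LP i] @ rest \<and> no_lock i R2 \<and>
        stuck_before IS S (length R1 + 1 + length R2) i)
   \<or> (\<exists>R1 rest. S = R1 @ [LP i] @ rest \<and> no_lock i R1 \<and>
        stuck_before IS S (length R1) i)"

end

theory Submission
  imports Defs
begin

text \<open>The process \<open>!\<checkmark>\<close> on its own has no reduction, so it is not may-convergent. A correct
  translation reflects this: the single subprocess \<open>\<tau>(!)\<checkmark>\<close> started in \<open>IS\<close> must never reach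
  \<open>\<checkmark>\<close>, and since a lone word runs deterministically, it gets stuck in front of some \<open>P\<^sub>i\<close>
  whose lock is full. Look back for the last access to lock \<open>i\<close> before that point: if there
  is none, we have a blocking subsequence \<open>R P\<^sub>i\<close>; otherwise that access cannot be \<open>T\<^sub>i\<close>,
  which would have left the lock empty, so it is \<open>P\<^sub>i\<close> and we get \<open>P\<^sub>i R P\<^sub>i\<close>.\<close>

lemma length_exec_word: "exec_word C w = Some C' \<Longrightarrow> length C' = length C"
  by (induction C w rule: exec_word.induct) (auto split: if_splits)

lemma exec_word_append:
  "exec_word C (v @ w) = Option.bind (exec_word C v) (\<lambda>C'. exec_word C' w)"
  by (induction C v rule: exec_word.induct) auto

lemma exec_word_no_lock_nth:
  "exec_word C w = Some C' \<Longrightarrow> no_lock i w \<Longrightarrow> C' ! i = C ! i"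
  by (induction C w rule: exec_word.induct) (fastforce simp: no_lock_def split: if_splits)+

lemma exec_word_None_imp_stuck_before:
  "exec_word C w = None \<Longrightarrow> \<exists>n i. stuck_before C w n i"
proof (induction C w rule: exec_word.induct)
  case (2 C j w)
  show ?case
  proof (cases "C ! j")
    case True
    then have "stuck_before C (LP j # w) 0 j" by (simp add: stuck_before_def)
    then show ?thesis by blast
  next
    case False
    with "2" obtain n i where "stuck_before (C[j := True]) w n i" by auto
    with False have "stuck_before C (LP j # w) (Suc n) i" by (simp add: stuck_before_def)
    then show ?thesis by blast
  qed
next
  case (3 C j w)
  then obtain n i where "stuck_before (C[j := False]) w n i" by auto
  then have "stuck_before C (LT j # w) (Suc n) i" by (simp add: stuck_before_def)
  then show ?case by blast
qed simp

lemma exec_word_last_access: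
  assumes "exec_word C (x # R) = Some C'" and "lidx x = i" and "no_lock i R"
    and "i < length C"
  shows "C' ! i \<longleftrightarrow> x = LP i"
proof (cases x)
  case (LP j)
  with assms(1,2) have "exec_word (C[i := True]) R = Some C'" by (simp split: if_splits)
  with assms(2-4) LP show ?thesis by (simp add: exec_word_no_lock_nth)
next
  case (LT j)
  with assms(1,2) have "exec_word (C[i := False]) R = Some C'" by simp
  with assms(3,4) LT show ?thesis by (simp add: exec_word_no_lock_nth)
qed

lemma stuck_before_imp_has_blocking_subseq:
  assumes stuck: "stuck_before C S n i" and "i < length C"
  shows "has_blocking_subseq C S i"
proof -
  from stuck obtain C' where n: "n < length S" "S ! n = LP i"
    and run: "exec_word C (take n S) = Some C'" and full: "C' ! i"
    unfolding stuck_before_def by blast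
  have S: "S = take n S @ [LP i] @ drop (Suc n) S"
    using n id_take_nth_drop by fastforce
  show ?thesis
  proof (cases "no_lock i (take n S)")
    case True
    with S stuck n(1) show ?thesis
      unfolding has_blocking_subseq_def by (metis length_take min.absorb4)
  next
    case False
    then have "\<exists>x\<in>set (take n S). lidx x = i"
      unfolding no_lock_def by (metis lidx.simps)
    then obtain R1 x R2 where prefix: "take n S = R1 @ x # R2" and x: "lidx x = i"
      and R2: "\<forall>y\<in>set R2. lidx y \<noteq> i"
      using split_list_last_prop[of "take n S" "\<lambda>x. lidx x = i"] by blast
    have R2_free: "no_lock i R2"
      using R2 unfolding no_lock_def by (metis lidx.simps)
    from run prefix obtain C1 where C1: "exec_word C R1 = Some C1"
      and "exec_word C1 (x # R2) = Some C'"
      by (auto simp: exec_word_append bind_eq_Some_conv)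
    with x R2_free full \<open>i < length C\<close> have "x = LP i"
      using exec_word_last_access length_exec_word by metis
    with S prefix have "S = R1 @ [LP i] @ R2 @ [LP i] @ drop (Suc n) S"
      by simp
    moreover have "n = length R1 + 1 + length R2"
      using prefix n(1) by (metis length_append length_Cons length_take min.absorb4
          add.assoc plus_1_eq_Suc add.commute)
    ultimately show ?thesis
      unfolding has_blocking_subseq_def using stuck R2_free by blast
  qed
qed

lemma lred_rtranclp_exec_word:
  "exec_word C w = Some C' \<Longrightarrow> lred\<^sup>*\<^sup>* ({#(w @ u, e)#} + P, C) ({#(u, e)#} + P, C')"
proof (induction C w rule: exec_word.induct)
  case (2 C j w)
  then have "\<not> C ! j" by (simp split: if_splits)
  then have "lred ({#(LP j # w @ u, e)#} + P, C) ({#(w @ u, e)#} + P, C[j := True])"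
    by (rule lred_P)
  with "2" \<open>\<not> C ! j\<close> show ?case by (simp add: converse_rtranclp_into_rtranclp)
next
  case (3 C j w)
  have "lred ({#(LT j # w @ u, e)#} + P, C) ({#(w @ u, e)#} + P, C[j := False])"
    by (rule lred_T)
  with "3" show ?case by (simp add: converse_rtranclp_into_rtranclp)
qed simp

lemma sred_rtranclp_singleton: "sred\<^sup>*\<^sup>* {#u#} Q \<Longrightarrow> Q = {#u#}"
proof (induction rule: rtranclp_induct)
  case (step Q Q')
  from step.hyps(2) step.IH show ?case
    by (cases rule: sred.cases) (auto dest: arg_cong[of _ _ size])
qed simp

lemma s_may_singleton_iff: "s_may {#u#} \<longleftrightarrow> u = SCheck"
  using sred_rtranclp_singleton unfolding s_may_def s_successful_def by fastforce

lemma correct_translation_exec_word_None: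
  assumes "correct_translation k IS ws wr" and "u \<noteq> SCheck"
    and "tr_sub ws wr u = (w, True)"
  shows "exec_word IS w = None"
proof (rule ccontr)
  assume "exec_word IS w \<noteq> None"
  then obtain C where "exec_word IS w = Some C" by blast
  from lred_rtranclp_exec_word[OF this, of "[]" True "{#}"]
  have "l_may (tr_proc ws wr {#u#}, IS)"
    using assms(3) unfolding l_may_def l_successful_def tr_proc_def by auto
  with assms(1) have "s_may {#u#}" unfolding correct_translation_def by blast
  with assms(2) show False by (simp add: s_may_singleton_iff)
qed

theorem lemma4p4:
  fixes k :: nat and IS :: "bool list" and ws wr :: "lact list"
  assumes "k \<ge> 2" and "length IS = k"
    and "correct_translation k IS ws wr"
  shows "(\<exists>i<k. has_blocking_subseq IS ws i) \<and> (\<exists>i<k. has_blocking_subseq IS wr i)"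
proof -
  have blocking: "\<exists>i<k. has_blocking_subseq IS S i"
    if "exec_word IS S = None" and "set S \<subseteq> set ws \<union> set wr" for S
  proof -
    from that(1) obtain n i where stuck: "stuck_before IS S n i"
      using exec_word_None_imp_stuck_before by blast
    then have "LP i \<in> set S" unfolding stuck_before_def by (metis nth_mem)
    with that(2) assms(3) have "i < k" unfolding correct_translation_def by force
    with stuck assms(2) show ?thesis
      using stuck_before_imp_has_blocking_subseq by blast
  qed
  have "exec_word IS ws = None"
    using correct_translation_exec_word_None[OF assms(3), of "SSend SCheck"] by simp
  moreover have "exec_word IS wr = None"
    using correct_translation_exec_word_None[OF assms(3), of "SRecv SCheck"] by simp
  ultimately show ?thesis using blocking by blast
qed

end
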